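(* For every $n\ge4$, the space $\mathrm{CSN}_n$, with the length metric obtained by giving each orthant $O_\pi$ its Euclidean metric and gluing, is not a CAT(0) space.
   Context: $X$ is a set of $n\ge4$ labels. A split of $X$ is an unordered partition of $X$ into two nonempty sets; it is trivial if one part is a singleton. A circular ordering of $X$ is a cyclic arrangement $\pi=(x_1,\dots,x_n)$ up to rotation and reflection; a split is circular w.r.t. $\pi$ if it has the form $\{\{x_{i+1},\dots,x_j\},X\setminus\{x_{i+1},\dots,x_j\}\}$ (indices mod $n$). Let $\delta=2^{n-1}-n-1$ and give $\mathbb R^\delta$ coordinates indexed by nontrivial splits. For each circular ordering $\pi$, $O_\pi\subset\mathbb R^\delta$ is the set of nonnegative vectors whose support consists of splits circular w.r.t. $\pi$ (an orthant of dimension $n(n-3)/2$), and $\mathrm{CSN}_n=\bigcup_\pi O_\pi$. *)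

theory Defs
  imports "HOL-Analysis.Analysis"
begin

definition metric_on :: "'a set \<Rightarrow> ('a \<Rightarrow> 'a \<Rightarrow> real) \<Rightarrow> bool" where
  "metric_on S d \<longleftrightarrow>
     (\<forall>x\<in>S. \<forall>y\<in>S. (d x y = 0 \<longleftrightarrow> x = y) \<and> d x y = d y x) \<and>
     (\<forall>x\<in>S. \<forall>y\<in>S. \<forall>z\<in>S. d x z \<le> d x y + d y z)"

definition geodesic_seg :: "'a set \<Rightarrow> ('a \<Rightarrow> 'a \<Rightarrow> real) \<Rightarrow> (real \<Rightarrow> 'a) \<Rightarrow> 'a \<Rightarrow> 'a \<Rightarrow> bool" where
  "geodesic_seg S d g x y \<longleftrightarrow>
     g 0 = x \<and> g (d x y) = y \<and> (\<forall>s\<in>{0..d x y}. g s \<in> S) \<and>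
     (\<forall>s\<in>{0..d x y}. \<forall>t\<in>{0..d x y}. d (g s) (g t) = \<bar>s - t\<bar>)"

definition geodesic_space :: "'a set \<Rightarrow> ('a \<Rightarrow> 'a \<Rightarrow> real) \<Rightarrow> bool" where
  "geodesic_space S d \<longleftrightarrow> (\<forall>x\<in>S. \<forall>y\<in>S. \<exists>g. geodesic_seg S d g x y)"

definition comp_pt :: "complex \<Rightarrow> complex \<Rightarrow> real \<Rightarrow> real \<Rightarrow> complex" where
  "comp_pt a b l s = (if l = 0 then a else a + of_real (s / l) * (b - a))"

definition CAT0 :: "'a set \<Rightarrow> ('a \<Rightarrow> 'a \<Rightarrow> real) \<Rightarrow> bool" where
  "CAT0 S d \<longleftrightarrow> metric_on S d \<and> geodesic_space S d \<and>
    (\<forall>p\<in>S. \<forall>q\<in>S. \<forall>r\<in>S. \<forall>g1 g2 g3.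
       geodesic_seg S d g1 p q \<and> geodesic_seg S d g2 q r \<and> geodesic_seg S d g3 r p \<longrightarrow>
       (\<forall>a b c :: complex. dist a b = d p q \<and> dist b c = d q r \<and> dist c a = d r p \<longrightarrow>
          (\<forall>(g, l, u, v) \<in> set [(g1, d p q, a, b), (g2, d q r, b, c), (g3, d r p, c, a)].
           \<forall>(g', l', u', v') \<in> set [(g1, d p q, a, b), (g2, d q r, b, c), (g3, d r p, c, a)].
           \<forall>s\<in>{0..l}. \<forall>t\<in>{0..l'}.
             d (g s) (g' t) \<le> dist (comp_pt u v l s) (comp_pt u' v' l' t))))"

text \<open>Label set X = {0..<n}. A split is represented as the unordered pair {A, X - A}.\<close>
definition is_split :: "nat \<Rightarrow> nat set set \<Rightarrow> bool" where
  "is_split n P \<longleftrightarrow> (\<exists>A. A \<subseteq> {..<n} \<and> A \<noteq> {} \<and> A \<noteq> {..<n} \<and> P = {A, {..<n} - A})"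

definition nontrivial_split :: "nat \<Rightarrow> nat set set \<Rightarrow> bool" where
  "nontrivial_split n P \<longleftrightarrow> is_split n P \<and> (\<forall>A\<in>P. 2 \<le> card A)"

text \<open>R^delta: real vectors indexed by the nontrivial splits (zero elsewhere).\<close>
definition coord_space :: "nat \<Rightarrow> (nat set set \<Rightarrow> real) set" where
  "coord_space n = {v. \<forall>P. \<not> nontrivial_split n P \<longrightarrow> v P = 0}"

definition eucl_dist :: "nat \<Rightarrow> (nat set set \<Rightarrow> real) \<Rightarrow> (nat set set \<Rightarrow> real) \<Rightarrow> real" where
  "eucl_dist n v w = sqrt (\<Sum>P\<in>{P. nontrivial_split n P}. (v P - w P)^2)"

text \<open>A circular ordering is given by a bijection pi : {0..<n} -> X, read cyclically
  (x_1,...,x_n) = (pi 0, ..., pi (n-1)).\<close>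
definition circ_ordering :: "nat \<Rightarrow> (nat \<Rightarrow> nat) \<Rightarrow> bool" where
  "circ_ordering n \<pi> \<longleftrightarrow> bij_betw \<pi> {..<n} {..<n}"

text \<open>A split is circular w.r.t. pi iff one of its parts is a cyclic interval of pi;
  since the complement of a wrapping cyclic interval is a non-wrapping one, it suffices
  that one part is a contiguous block pi ` {i..<j}.\<close>
definition circular_split :: "nat \<Rightarrow> (nat \<Rightarrow> nat) \<Rightarrow> nat set set \<Rightarrow> bool" where
  "circular_split n \<pi> P \<longleftrightarrow> is_split n P \<and> (\<exists>i j. i < j \<and> j \<le> n \<and> \<pi> ` {i..<j} \<in> P)"

definition orthant :: "nat \<Rightarrow> (nat \<Rightarrow> nat) \<Rightarrow> (nat set set \<Rightarrow> real) set" where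
  "orthant n \<pi> = {v \<in> coord_space n. (\<forall>P. 0 \<le> v P) \<and> (\<forall>P. v P \<noteq> 0 \<longrightarrow> circular_split n \<pi> P)}"

definition CSN :: "nat \<Rightarrow> (nat set set \<Rightarrow> real) set" where
  "CSN n = (\<Union>\<pi>\<in>{\<pi>. circ_ordering n \<pi>}. orthant n \<pi>)"

text \<open>The glued (quotient length) metric: infimum over chains x = c 0, ..., c k = y with
  consecutive points in a common orthant, of the sum of Euclidean lengths.\<close>
definition csn_dist :: "nat \<Rightarrow> (nat set set \<Rightarrow> real) \<Rightarrow> (nat set set \<Rightarrow> real) \<Rightarrow> real" where
  "csn_dist n x y = Inf {(\<Sum>i<k. eucl_dist n (c i) (c (Suc i))) | k c.
       c 0 = x \<and> c k = y \<and>
       (\<forall>i<k. \<exists>\<pi>. circ_ordering n \<pi> \<and> c i \<in> orthant n \<pi> \<and> c (Suc i) \<in> orthant n \<pi>)}"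

end

theory Submission
  imports Defs
begin

text \<open>Let \<open>A, B, C\<close> be the splits \<open>{0,1}\<close>, \<open>{1,2}\<close>, \<open>{0,2}\<close> against the rest. Any two of them are
  circular for a common ordering, but all three never are, since positions carrying 0, 1, 2 cannot be
  pairwise cyclically adjacent when \<open>n \<ge> 4\<close>. Hence the segments between the unit vectors
  \<open>e\<^sub>A, e\<^sub>B, e\<^sub>C\<close> form a geodesic triangle with all sides \<open>sqrt 2\<close>, and CAT(0) would put the
  midpoints of two sides at distance at most \<open>sqrt 2 / 2\<close>. In the coordinates \<open>(v A, v B, v C)\<close>, the
  function \<open>sqrt (\<parallel>v - o\<parallel>\<^sup>2 - 1/4)\<close> with \<open>o = (-1/2, 1/2, 1/2)\<close> is 1-Lipschitz on every orthant,
  hence for the glued metric, and it takes the values 1 and 0 at those midpoints.\<close>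

lemma finite_nontrivial_splits: "finite {P. nontrivial_split n P}"
  by (rule finite_subset[of _ "Pow (Pow {..<n})"]) (auto simp: nontrivial_split_def is_split_def)

lemma eucl_dist_nonneg: "0 \<le> eucl_dist n v w"
  by (simp add: eucl_dist_def sum_nonneg)

lemma eucl_dist_self [simp]: "eucl_dist n v v = 0"
  by (simp add: eucl_dist_def)

lemma eucl_dist_commute: "eucl_dist n v w = eucl_dist n w v"
  unfolding eucl_dist_def by (simp add: power2_commute)

lemma sqrt_sum_le_eucl_dist:
  assumes "T \<subseteq> {P. nontrivial_split n P}"
  shows "sqrt (\<Sum>P\<in>T. (v P - w P)\<^sup>2) \<le> eucl_dist n v w"
  unfolding eucl_dist_def
  by (rule real_sqrt_le_mono, rule sum_mono2[OF finite_nontrivial_splits assms]) simp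

lemma diff_div_sqrt2_le_sqrt_sum_squares: "(y - x) / sqrt 2 \<le> sqrt (x\<^sup>2 + y\<^sup>2)"
proof (rule real_le_rsqrt)
  have "((y - x) / sqrt 2)\<^sup>2 = (y - x)\<^sup>2 / 2" by (simp add: power_divide)
  also have "\<dots> \<le> x\<^sup>2 + y\<^sup>2" using sum_squares_ge_zero[of "x + y" 0]
    by (simp add: power2_eq_square algebra_simps)
  finally show "((y - x) / sqrt 2)\<^sup>2 \<le> x\<^sup>2 + y\<^sup>2" .
qed

lemma sqrt_sum_squares_diff_le: "sqrt (a\<^sup>2 + b\<^sup>2) - sqrt (c\<^sup>2 + d\<^sup>2) \<le> sqrt ((a - c)\<^sup>2 + (b - d)\<^sup>2)"
  using real_sqrt_sum_squares_triangle_ineq[of "a - c" c "b - d" d] by simp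


section \<open>The glued metric as an infimum over orthant chains\<close>

definition orthant_chain :: "nat \<Rightarrow> (nat \<Rightarrow> nat set set \<Rightarrow> real) \<Rightarrow> nat \<Rightarrow> bool" where
  "orthant_chain n c k \<longleftrightarrow>
     (\<forall>i<k. \<exists>\<pi>. circ_ordering n \<pi> \<and> c i \<in> orthant n \<pi> \<and> c (Suc i) \<in> orthant n \<pi>)"

definition chain_length :: "nat \<Rightarrow> (nat \<Rightarrow> nat set set \<Rightarrow> real) \<Rightarrow> nat \<Rightarrow> real" where
  "chain_length n c k = (\<Sum>i<k. eucl_dist n (c i) (c (Suc i)))"

lemma csn_dist_eq_Inf_chain_length:
  "csn_dist n x y = Inf {chain_length n c k | k c. c 0 = x \<and> c k = y \<and> orthant_chain n c k}"
  unfolding csn_dist_def chain_length_def orthant_chain_def ..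

lemma csn_dist_le_chain_length:
  assumes "c 0 = x" "c k = y" "orthant_chain n c k"
  shows "csn_dist n x y \<le> chain_length n c k"
  unfolding csn_dist_eq_Inf_chain_length
  by (rule cInf_lower) (use assms in \<open>auto intro!: bdd_belowI[of _ 0] sum_nonneg
      simp: chain_length_def eucl_dist_nonneg\<close>)

lemma orthant_chain_via:
  assumes "circ_ordering n \<pi>" "x \<in> orthant n \<pi>" "z \<in> orthant n \<pi>"
    and "circ_ordering n \<pi>'" "z \<in> orthant n \<pi>'" "y \<in> orthant n \<pi>'"
  shows "orthant_chain n (\<lambda>i. if i = 0 then x else if i = 1 then z else y) 2"
  using assms unfolding orthant_chain_def by (auto simp: less_2_cases_iff)

lemma csn_dist_le_eucl_dist:
  assumes "circ_ordering n \<pi>" "x \<in> orthant n \<pi>" "y \<in> orthant n \<pi>"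
  shows "csn_dist n x y \<le> eucl_dist n x y"
  using csn_dist_le_chain_length[OF _ _ orthant_chain_via[OF assms assms(1,3,3)]]
  by (simp add: chain_length_def numeral_2_eq_2)

lemma Lipschitz_le_csn_dist:
  assumes Lip: "\<And>\<pi> v w. circ_ordering n \<pi> \<Longrightarrow> v \<in> orthant n \<pi> \<Longrightarrow> w \<in> orthant n \<pi> \<Longrightarrow>
      F v - F w \<le> eucl_dist n v w"
    and chain: "c 0 = x" "c k = y" "orthant_chain n c k"
  shows "F x - F y \<le> csn_dist n x y"
proof -
  have along_chain: "F (d 0) - F (d m) \<le> chain_length n d m" if "orthant_chain n d m" for d m
    using that
  proof (induction m)
    case (Suc m)
    then obtain \<pi> where "circ_ordering n \<pi>" "d m \<in> orthant n \<pi>" "d (Suc m) \<in> orthant n \<pi>"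
      unfolding orthant_chain_def by blast
    then have "F (d m) - F (d (Suc m)) \<le> eucl_dist n (d m) (d (Suc m))" by (rule Lip)
    moreover have "F (d 0) - F (d m) \<le> chain_length n d m"
      using Suc unfolding orthant_chain_def by auto
    ultimately show ?case by (simp add: chain_length_def)
  qed (simp add: chain_length_def)
  show ?thesis
    unfolding csn_dist_eq_Inf_chain_length
    by (rule cInf_greatest) (use chain in auto, metis along_chain)
qed


section \<open>Edges between unit vectors are geodesics\<close>

lemma orthant_memI:
  assumes "\<And>P. 0 \<le> v P" "\<And>P. v P \<noteq> 0 \<Longrightarrow> nontrivial_split n P \<and> circular_split n \<pi> P"
  shows "v \<in> orthant n \<pi>"
  using assms unfolding orthant_def coord_space_def by blast

lemma orthant_subset_CSN: "circ_ordering n \<pi> \<Longrightarrow> orthant n \<pi> \<subseteq> CSN n"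
  unfolding CSN_def by blast

definition unit_vec :: "nat set set \<Rightarrow> nat set set \<Rightarrow> real" where
  "unit_vec P = (\<lambda>R. if R = P then 1 else 0)"

definition unit_edge :: "nat set set \<Rightarrow> nat set set \<Rightarrow> real \<Rightarrow> nat set set \<Rightarrow> real" where
  "unit_edge P Q s = (\<lambda>R. (if R = P then 1 - s / sqrt 2 else 0) + (if R = Q then s / sqrt 2 else 0))"

lemma unit_edge_0 [simp]: "unit_edge P Q 0 = unit_vec P"
  by (simp add: unit_edge_def unit_vec_def fun_eq_iff)

lemma unit_edge_sqrt2 [simp]: "unit_edge P Q (sqrt 2) = unit_vec Q"
  by (simp add: unit_edge_def unit_vec_def fun_eq_iff)

lemma unit_edge_in_orthant:
  assumes "nontrivial_split n P" "nontrivial_split n Q" "circular_split n \<pi> P" "circular_split n \<pi> Q"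
    and "s \<in> {0..sqrt 2}"
  shows "unit_edge P Q s \<in> orthant n \<pi>"
  by (rule orthant_memI) (use assms in \<open>auto simp: unit_edge_def split: if_splits\<close>)

lemma eucl_dist_unit_edge:
  assumes "nontrivial_split n P" "nontrivial_split n Q" "P \<noteq> Q"
  shows "eucl_dist n (unit_edge P Q s) (unit_edge P Q t) = \<bar>s - t\<bar>"
proof -
  have "(\<Sum>R\<in>{R. nontrivial_split n R}. (unit_edge P Q s R - unit_edge P Q t R)\<^sup>2)
      = (\<Sum>R\<in>{P, Q}. (unit_edge P Q s R - unit_edge P Q t R)\<^sup>2)"
    by (rule sum.mono_neutral_right[OF finite_nontrivial_splits]) (auto simp: assms unit_edge_def)
  also have "\<dots> = (s - t)\<^sup>2"
    using assms by (simp add: unit_edge_def power2_eq_square field_simps)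
  finally show ?thesis by (simp add: eucl_dist_def)
qed

text \<open>Lower bound by the 1-Lipschitz function \<open>v \<mapsto> (v Q - v P) / sqrt 2\<close>, which increases
  at unit speed along the edge.\<close>

lemma csn_dist_unit_edge:
  assumes P: "nontrivial_split n P" and Q: "nontrivial_split n Q" and "P \<noteq> Q"
    and \<pi>: "circ_ordering n \<pi>" "circular_split n \<pi> P" "circular_split n \<pi> Q"
    and s: "s \<in> {0..sqrt 2}" and t: "t \<in> {0..sqrt 2}"
  shows "csn_dist n (unit_edge P Q s) (unit_edge P Q t) = \<bar>s - t\<bar>"
proof (rule antisym)
  note orth = unit_edge_in_orthant[OF P Q \<pi>(2,3)]
  show "csn_dist n (unit_edge P Q s) (unit_edge P Q t) \<le> \<bar>s - t\<bar>"
    using csn_dist_le_eucl_dist[OF \<pi>(1) orth[OF s] orth[OF t]] eucl_dist_unit_edge[OF P Q \<open>P \<noteq> Q\<close>]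
    by simp
  define F where "F v = (v Q - v P) / sqrt 2" for v :: "nat set set \<Rightarrow> real"
  have Lip: "F v - F w \<le> eucl_dist n v w" for v w
  proof -
    have "F v - F w = ((v Q - w Q) - (v P - w P)) / sqrt 2" by (simp add: F_def diff_divide_distrib)
    also have "\<dots> \<le> sqrt ((v P - w P)\<^sup>2 + (v Q - w Q)\<^sup>2)" by (rule diff_div_sqrt2_le_sqrt_sum_squares)
    also have "\<dots> = sqrt (\<Sum>R\<in>{P, Q}. (v R - w R)\<^sup>2)" using \<open>P \<noteq> Q\<close> by simp
    also have "\<dots> \<le> eucl_dist n v w" by (rule sqrt_sum_le_eucl_dist) (use P Q in auto)
    finally show ?thesis .
  qed
  have F_edge: "F (unit_edge P Q r) = r - 1 / sqrt 2" for r
    using \<open>P \<noteq> Q\<close> by (simp add: F_def unit_edge_def field_simps)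
  note chain = orthant_chain_via[OF \<pi>(1) orth[OF s] orth[OF t] \<pi>(1) orth[OF t] orth[OF t]]
  have "F (unit_edge P Q s) - F (unit_edge P Q t) \<le> csn_dist n (unit_edge P Q s) (unit_edge P Q t)"
    by (rule Lipschitz_le_csn_dist[OF Lip _ _ chain]) auto
  moreover have "- F (unit_edge P Q s) - - F (unit_edge P Q t)
      \<le> csn_dist n (unit_edge P Q s) (unit_edge P Q t)"
    by (rule Lipschitz_le_csn_dist[OF _ _ _ chain]) (use Lip eucl_dist_commute in \<open>force+\<close>)
  ultimately show "\<bar>s - t\<bar> \<le> csn_dist n (unit_edge P Q s) (unit_edge P Q t)"
    by (simp add: F_edge abs_le_iff)
qed

lemma geodesic_seg_unit_edge:
  assumes "nontrivial_split n P" "nontrivial_split n Q" "P \<noteq> Q"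
    and "circ_ordering n \<pi>" "circular_split n \<pi> P" "circular_split n \<pi> Q"
  shows "csn_dist n (unit_vec P) (unit_vec Q) = sqrt 2"
    and "geodesic_seg (CSN n) (csn_dist n) (unit_edge P Q) (unit_vec P) (unit_vec Q)"
proof -
  note d = csn_dist_unit_edge[OF assms]
  show len: "csn_dist n (unit_vec P) (unit_vec Q) = sqrt 2"
    using d[of 0 "sqrt 2"] by simp
  show "geodesic_seg (CSN n) (csn_dist n) (unit_edge P Q) (unit_vec P) (unit_vec Q)"
    unfolding geodesic_seg_def len
    using d unit_edge_in_orthant[OF assms(1,2,5,6)] orthant_subset_CSN[OF assms(4)] by auto
qed


section \<open>Equilateral triangles in CAT(0) spaces\<close>

lemma CAT0_equilateral_midpoints:
  assumes cat: "CAT0 S d" and "0 \<le> l"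
    and g1: "geodesic_seg S d g1 p q" and g2: "geodesic_seg S d g2 q r" and g3: "geodesic_seg S d g3 r p"
    and pq: "d p q = l" and qr: "d q r = l" and rp: "d r p = l"
  shows "d (g1 (l / 2)) (g2 (l / 2)) \<le> l / 2"
proof -
  have S: "p \<in> S" "q \<in> S" "r \<in> S"
    using g1 g2 g3 \<open>0 \<le> l\<close> pq qr rp unfolding geodesic_seg_def by (metis atLeastAtMost_iff order_refl)+
  define a b c :: complex where "a = 0" "b = complex_of_real l" "c = Complex (l / 2) (l * sqrt 3 / 2)"
  have sides: "dist a b = l" "dist b c = l" "dist c a = l"
    using \<open>0 \<le> l\<close> by (simp_all add: a_b_c_def dist_norm cmod_def power2_eq_square field_simps
        real_sqrt_mult[symmetric])
  note triangle = cat[unfolded CAT0_def, THEN conjunct2, THEN conjunct2,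
      THEN bspec, OF S(1), THEN bspec, OF S(2), THEN bspec, OF S(3), THEN spec, THEN spec, THEN spec,
      THEN mp, OF conjI[OF g1 conjI[OF g2 g3]],
      THEN spec[where x = a], THEN spec[where x = b], THEN spec[where x = c], THEN mp]
  have "\<forall>s\<in>{0..l}. \<forall>t\<in>{0..l}. d (g1 s) (g2 t) \<le> dist (comp_pt a b l s) (comp_pt b c l t)"
    using triangle sides unfolding pq qr rp by simp
  then have "d (g1 (l / 2)) (g2 (l / 2)) \<le> dist (comp_pt a b l (l / 2)) (comp_pt b c l (l / 2))"
    using \<open>0 \<le> l\<close> by simp
  also have "\<dots> = l / 2"
  proof (cases "l = 0")
    case False
    then have "comp_pt a b l (l / 2) - comp_pt b c l (l / 2) = (a - c) / 2"
      by (simp add: comp_pt_def field_simps)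
    then have "dist (comp_pt a b l (l / 2)) (comp_pt b c l (l / 2)) = dist a c / 2"
      unfolding dist_norm by (simp only:) (simp add: norm_divide)
    then show ?thesis using sides(3) by (simp add: dist_commute)
  qed (simp add: comp_pt_def a_b_c_def)
  finally show ?thesis .
qed


section \<open>Pair splits and circular orderings\<close>

definition pair_split :: "nat \<Rightarrow> nat \<Rightarrow> nat \<Rightarrow> nat set set" where
  "pair_split n u v = {{u, v}, {..<n} - {u, v}}"

lemma pair_split_commute: "pair_split n u v = pair_split n v u"
  by (simp add: pair_split_def insert_commute)

lemma nontrivial_pair_split:
  assumes "u < n" "v < n" "u \<noteq> v" "4 \<le> n"
  shows "nontrivial_split n (pair_split n u v)"
proof -
  have sub: "{u, v} \<subseteq> {..<n}" and card_uv: "card {u, v} = 2" using assms by auto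
  then have card_co: "card ({..<n} - {u, v}) = n - 2" by (simp add: card_Diff_subset)
  have "{u, v} \<noteq> {..<n}"
  proof
    assume "{u, v} = {..<n}"
    then have "card {..<n} = 2" using card_uv by simp
    then show False using assms(4) by simp
  qed
  then have "is_split n (pair_split n u v)"
    using sub unfolding is_split_def pair_split_def by (intro exI[of _ "{u, v}"]) simp
  moreover have "2 \<le> card A" if "A \<in> pair_split n u v" for A
    using that card_uv card_co assms(4) by (auto simp: pair_split_def)
  ultimately show ?thesis unfolding nontrivial_split_def by blast
qed

definition cyclically_adjacent :: "nat \<Rightarrow> nat \<Rightarrow> nat \<Rightarrow> bool" where
  "cyclically_adjacent n p q \<longleftrightarrow>
     q = Suc p \<or> p = Suc q \<or> (p = 0 \<and> q = n - 1) \<or> (q = 0 \<and> p = n - 1)"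

lemma interval_eq_pair_cyclically_adjacent:
  assumes "{i..<j} = {p, q}" "p \<noteq> q"
  shows "cyclically_adjacent n p q"
proof -
  have "j = Suc (Suc i)" using arg_cong[OF assms(1), of card] assms(2) by simp
  then have "{p, q} = {i, Suc i}" using assms(1) by (simp add: atLeastLessThanSuc insert_commute)
  then show ?thesis unfolding cyclically_adjacent_def by (metis doubleton_eq_iff)
qed

lemma interval_eq_pair_complement_cyclically_adjacent:
  assumes "{i..<j} = {..<n} - {p, q}" "i < j" "j \<le> n" "p < n" "q < n" "p \<noteq> q"
  shows "cyclically_adjacent n p q"
proof -
  have "{p, q} = {..<n} - ({..<n} - {p, q})" using assms(4,5) by blast
  also have "\<dots> = {..<i} \<union> {j..<n}" unfolding assms(1)[symmetric] using assms(2,3)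
    by (simp add: set_eq_iff, intro allI) linarith
  finally have pq: "{p, q} = {..<i} \<union> {j..<n}" .
  have "card ({..<i} \<union> {j..<n}) = i + (n - j)"
    using assms(2) by (subst card_Un_disjoint) auto
  then have "i + (n - j) = 2" using arg_cong[OF pq, of card] assms(6) by simp
  define m where "m = n - 2"
  with \<open>i + (n - j) = 2\<close> assms(2,3) have n: "n = Suc (Suc m)" by linarith
  with \<open>i + (n - j) = 2\<close> consider "i = 0" "j = m" | "i = 1" "j = Suc m" | "i = 2" "j = Suc (Suc m)"
    using assms(3) by linarith
  then have "{p, q} = {m, Suc m} \<or> {p, q} = {0, Suc m} \<or> {p, q} = {0, 1}"
    using pq by cases (simp_all add: n numeral_2_eq_2 atLeastLessThanSuc lessThan_Suc insert_commute)
  then show ?thesis unfolding cyclically_adjacent_def n doubleton_eq_iff by auto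
qed

lemma circular_pair_split_cyclically_adjacent:
  assumes \<pi>: "circ_ordering n \<pi>" and circ: "circular_split n \<pi> (pair_split n (\<pi> p) (\<pi> q))"
    and pq: "p < n" "q < n" "p \<noteq> q"
  shows "cyclically_adjacent n p q"
proof -
  have inj: "inj_on \<pi> {..<n}" and onto: "\<pi> ` {..<n} = {..<n}"
    using \<pi> by (auto simp: circ_ordering_def bij_betw_def)
  obtain i j where ij: "i < j" "j \<le> n" "\<pi> ` {i..<j} \<in> pair_split n (\<pi> p) (\<pi> q)"
    using circ unfolding circular_split_def by blast
  have sub: "{i..<j} \<subseteq> {..<n}" "{p, q} \<subseteq> {..<n}" "{..<n} - {p, q} \<subseteq> {..<n}"
    using ij(2) pq by auto
  have "{..<n} - {\<pi> p, \<pi> q} = \<pi> ` ({..<n} - {p, q})"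
    using inj_on_image_set_diff[OF inj _ sub(2)] onto by simp
  then consider "\<pi> ` {i..<j} = \<pi> ` {p, q}" | "\<pi> ` {i..<j} = \<pi> ` ({..<n} - {p, q})"
    using ij(3) unfolding pair_split_def by auto
  then show ?thesis
  proof cases
    case 1
    then have "{i..<j} = {p, q}" using inj_on_image_eq_iff[OF inj sub(1,2)] by simp
    then show ?thesis using pq(3) by (rule interval_eq_pair_cyclically_adjacent)
  next
    case 2
    then have "{i..<j} = {..<n} - {p, q}" using inj_on_image_eq_iff[OF inj sub(1,3)] by simp
    then show ?thesis using ij(1,2) pq by (rule interval_eq_pair_complement_cyclically_adjacent)
  qed
qed

lemma not_pairwise_cyclically_adjacent:
  assumes "4 \<le> n" "p < n" "q < n" "r < n" "p \<noteq> q" "q \<noteq> r" "r \<noteq> p"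
  shows "\<not> (cyclically_adjacent n p q \<and> cyclically_adjacent n q r \<and> cyclically_adjacent n r p)"
  unfolding cyclically_adjacent_def using assms by auto

lemma pair_splits_not_all_circular:
  assumes \<pi>: "circ_ordering n \<pi>" and "4 \<le> n" "u < n" "v < n" "w < n" "u \<noteq> v" "v \<noteq> w" "w \<noteq> u"
  shows "\<not> (circular_split n \<pi> (pair_split n u v) \<and> circular_split n \<pi> (pair_split n v w) \<and>
            circular_split n \<pi> (pair_split n w u))"
proof -
  have onto: "\<pi> ` {..<n} = {..<n}" using \<pi> by (simp add: circ_ordering_def bij_betw_def)
  have "\<exists>p<n. x = \<pi> p" if "x < n" for x
    using that onto[symmetric] unfolding image_def by blast
  then obtain p q r where pqr: "p < n" "q < n" "r < n" and "u = \<pi> p" "v = \<pi> q" "w = \<pi> r"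
    using assms(3-5) by meson
  moreover have "p \<noteq> q" "q \<noteq> r" "r \<noteq> p" using calculation assms(6-8) by auto
  ultimately show ?thesis
    using circular_pair_split_cyclically_adjacent[OF \<pi>] not_pairwise_cyclically_adjacent[OF assms(2) pqr]
    by blast
qed

lemma circular_pair_split_consecutive:
  assumes \<pi>: "circ_ordering n \<pi>" and "i + 1 < n" "4 \<le> n"
  shows "circular_split n \<pi> (pair_split n (\<pi> i) (\<pi> (i + 1)))"
proof -
  have bij: "bij_betw \<pi> {..<n} {..<n}" using \<pi> by (simp add: circ_ordering_def)
  have "\<pi> i < n" "\<pi> (i + 1) < n" using bij_betw_apply[OF bij] assms(2) by auto
  moreover have "\<pi> i \<noteq> \<pi> (i + 1)"
    using inj_on_eq_iff[OF bij_betw_imp_inj_on[OF bij], of i "i + 1"] assms(2) by simp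
  ultimately have "is_split n (pair_split n (\<pi> i) (\<pi> (i + 1)))"
    using nontrivial_pair_split assms(3) unfolding nontrivial_split_def by blast
  moreover have "\<pi> ` {i..<i + 2} \<in> pair_split n (\<pi> i) (\<pi> (i + 1))"
    by (simp add: pair_split_def numeral_2_eq_2 atLeastLessThanSuc insert_commute)
  moreover have "i < i + 2" "i + 2 \<le> n" using assms(2) by auto
  ultimately show ?thesis unfolding circular_split_def by blast
qed


section \<open>Three pairwise but not jointly circular splits\<close>

text \<open>On each coordinate plane, \<open>F\<close> is the Euclidean distance to the projection of
  \<open>(-1/2, 1/2, 1/2)\<close> onto that plane.\<close>

lemma coordinate_plane_Lipschitz:
  fixes x y z x' y' z' :: real
  defines "F \<equiv> \<lambda>x y z :: real. sqrt ((x + 1/2)\<^sup>2 + (y - 1/2)\<^sup>2 + (z - 1/2)\<^sup>2 - 1/4)"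
  assumes "(x = 0 \<and> x' = 0) \<or> (y = 0 \<and> y' = 0) \<or> (z = 0 \<and> z' = 0)"
  shows "F x y z - F x' y' z' \<le> sqrt ((x - x')\<^sup>2 + (y - y')\<^sup>2 + (z - z')\<^sup>2)"
  using assms(2)
proof (elim disjE conjE)
  assume "x = 0" "x' = 0"
  then have "F x y z - F x' y' z'
      = sqrt ((y - 1/2)\<^sup>2 + (z - 1/2)\<^sup>2) - sqrt ((y' - 1/2)\<^sup>2 + (z' - 1/2)\<^sup>2)"
    by (simp add: F_def power2_eq_square)
  also have "\<dots> \<le> sqrt ((y - y')\<^sup>2 + (z - z')\<^sup>2)"
    using sqrt_sum_squares_diff_le[of "y - 1/2" "z - 1/2" "y' - 1/2" "z' - 1/2"] by simp
  finally show ?thesis using \<open>x = 0\<close> \<open>x' = 0\<close> by simp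
next
  assume "y = 0" "y' = 0"
  then have "F x y z - F x' y' z'
      = sqrt ((x + 1/2)\<^sup>2 + (z - 1/2)\<^sup>2) - sqrt ((x' + 1/2)\<^sup>2 + (z' - 1/2)\<^sup>2)"
    by (simp add: F_def power2_eq_square)
  also have "\<dots> \<le> sqrt ((x - x')\<^sup>2 + (z - z')\<^sup>2)"
    using sqrt_sum_squares_diff_le[of "x + 1/2" "z - 1/2" "x' + 1/2" "z' - 1/2"] by simp
  finally show ?thesis using \<open>y = 0\<close> \<open>y' = 0\<close> by simp
next
  assume "z = 0" "z' = 0"
  then have "F x y z - F x' y' z'
      = sqrt ((x + 1/2)\<^sup>2 + (y - 1/2)\<^sup>2) - sqrt ((x' + 1/2)\<^sup>2 + (y' - 1/2)\<^sup>2)"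
    by (simp add: F_def power2_eq_square)
  also have "\<dots> \<le> sqrt ((x - x')\<^sup>2 + (y - y')\<^sup>2)"
    using sqrt_sum_squares_diff_le[of "x + 1/2" "y - 1/2" "x' + 1/2" "y' - 1/2"] by simp
  finally show ?thesis using \<open>z = 0\<close> \<open>z' = 0\<close> by simp
qed

lemma csn_dist_edge_midpoints_ge_1:
  assumes A: "nontrivial_split n A" and B: "nontrivial_split n B" and C: "nontrivial_split n C"
    and distinct: "A \<noteq> B" "B \<noteq> C" "C \<noteq> A"
    and not_all: "\<And>\<pi>. circ_ordering n \<pi> \<Longrightarrow>
      \<not> (circular_split n \<pi> A \<and> circular_split n \<pi> B \<and> circular_split n \<pi> C)"
    and AB: "circ_ordering n \<pi>\<^sub>1" "circular_split n \<pi>\<^sub>1 A" "circular_split n \<pi>\<^sub>1 B"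
    and BC: "circ_ordering n \<pi>\<^sub>2" "circular_split n \<pi>\<^sub>2 B" "circular_split n \<pi>\<^sub>2 C"
  shows "1 \<le> csn_dist n (unit_edge A B (sqrt 2 / 2)) (unit_edge B C (sqrt 2 / 2))"
proof -
  define F where "F v = sqrt ((v A + 1/2)\<^sup>2 + (v B - 1/2)\<^sup>2 + (v C - 1/2)\<^sup>2 - 1/4)"
    for v :: "nat set set \<Rightarrow> real"
  have Lip: "F v - F w \<le> eucl_dist n v w"
    if "circ_ordering n \<pi>" "v \<in> orthant n \<pi>" "w \<in> orthant n \<pi>" for \<pi> v w
  proof -
    have "(v A = 0 \<and> w A = 0) \<or> (v B = 0 \<and> w B = 0) \<or> (v C = 0 \<and> w C = 0)"
      using not_all[OF that(1)] that(2,3) unfolding orthant_def by blast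
    then have "F v - F w \<le> sqrt ((v A - w A)\<^sup>2 + (v B - w B)\<^sup>2 + (v C - w C)\<^sup>2)"
      unfolding F_def by (rule coordinate_plane_Lipschitz)
    also have "\<dots> = sqrt (\<Sum>R\<in>{A, B, C}. (v R - w R)\<^sup>2)"
      using distinct by (simp add: add.assoc)
    also have "\<dots> \<le> eucl_dist n v w" by (rule sqrt_sum_le_eucl_dist) (use A B C in auto)
    finally show ?thesis .
  qed
  have "unit_edge A B (sqrt 2 / 2) \<in> orthant n \<pi>\<^sub>1" "unit_vec B \<in> orthant n \<pi>\<^sub>1"
    "unit_vec B \<in> orthant n \<pi>\<^sub>2" "unit_edge B C (sqrt 2 / 2) \<in> orthant n \<pi>\<^sub>2"
    using unit_edge_in_orthant[OF A B AB(2,3), of "sqrt 2 / 2"]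
      unit_edge_in_orthant[OF A B AB(2,3), of "sqrt 2"]
      unit_edge_in_orthant[OF B C BC(2,3), of 0]
      unit_edge_in_orthant[OF B C BC(2,3), of "sqrt 2 / 2"]
    by simp_all
  then have chain: "orthant_chain n (\<lambda>i. if i = 0 then unit_edge A B (sqrt 2 / 2)
      else if i = 1 then unit_vec B else unit_edge B C (sqrt 2 / 2)) 2"
    using orthant_chain_via[OF AB(1) _ _ BC(1)] by simp
  have "F (unit_edge A B (sqrt 2 / 2)) - F (unit_edge B C (sqrt 2 / 2))
      \<le> csn_dist n (unit_edge A B (sqrt 2 / 2)) (unit_edge B C (sqrt 2 / 2))"
    by (rule Lipschitz_le_csn_dist[OF Lip _ _ chain]) auto
  moreover have "F (unit_edge A B (sqrt 2 / 2)) = 1" "F (unit_edge B C (sqrt 2 / 2)) = 0"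
    using distinct by (simp_all add: F_def unit_edge_def power2_eq_square)
  ultimately show ?thesis by simp
qed

lemma not_CAT0_if_pairwise_but_not_jointly_circular:
  assumes A: "nontrivial_split n A" and B: "nontrivial_split n B" and C: "nontrivial_split n C"
    and not_all: "\<And>\<pi>. circ_ordering n \<pi> \<Longrightarrow>
      \<not> (circular_split n \<pi> A \<and> circular_split n \<pi> B \<and> circular_split n \<pi> C)"
    and AB: "circ_ordering n \<pi>\<^sub>1" "circular_split n \<pi>\<^sub>1 A" "circular_split n \<pi>\<^sub>1 B"
    and BC: "circ_ordering n \<pi>\<^sub>2" "circular_split n \<pi>\<^sub>2 B" "circular_split n \<pi>\<^sub>2 C"
    and CA: "circ_ordering n \<pi>\<^sub>3" "circular_split n \<pi>\<^sub>3 C" "circular_split n \<pi>\<^sub>3 A"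
  shows "\<not> CAT0 (CSN n) (csn_dist n)"
proof
  assume cat: "CAT0 (CSN n) (csn_dist n)"
  have distinct: "A \<noteq> B" "B \<noteq> C" "C \<noteq> A" using not_all AB BC CA by metis+
  note AB_edge = geodesic_seg_unit_edge[OF A B distinct(1) AB]
  note BC_edge = geodesic_seg_unit_edge[OF B C distinct(2) BC]
  note CA_edge = geodesic_seg_unit_edge[OF C A distinct(3) CA]
  have "csn_dist n (unit_edge A B (sqrt 2 / 2)) (unit_edge B C (sqrt 2 / 2)) \<le> sqrt 2 / 2"
    using CAT0_equilateral_midpoints[OF cat _ AB_edge(2) BC_edge(2) CA_edge(2)]
      AB_edge(1) BC_edge(1) CA_edge(1) by simp
  moreover have "1 \<le> csn_dist n (unit_edge A B (sqrt 2 / 2)) (unit_edge B C (sqrt 2 / 2))"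
    by (rule csn_dist_edge_midpoints_ge_1[OF A B C distinct not_all AB BC])
  moreover have "sqrt 2 < (2 :: real)" by (simp add: real_less_lsqrt)
  ultimately show False by simp
qed

theorem proposition6:
  fixes n :: nat
  assumes "4 \<le> n"
  shows "\<not> CAT0 (CSN n) (csn_dist n)"
proof -
  let ?\<tau> = Transposition.transpose
  \<comment> \<open>The orderings \<open>0 1 2 \<dots>\<close>, \<open>0 2 1 \<dots>\<close>, \<open>1 0 2 \<dots>\<close> each make two of the splits circular.\<close>
  have orderings: "circ_ordering n id" "circ_ordering n (?\<tau> 1 2)" "circ_ordering n (?\<tau> 0 1)"
    using assms by (simp_all add: circ_ordering_def)
  note consecutive = circular_pair_split_consecutive[OF _ _ assms]
  have nontrivial: "nontrivial_split n (pair_split n u v)" if "u < v" "v \<le> 2" for u v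
    using that assms by (intro nontrivial_pair_split) auto
  show ?thesis
  proof (rule not_CAT0_if_pairwise_but_not_jointly_circular
      [of n "pair_split n 0 1" "pair_split n 1 2" "pair_split n 0 2" id "?\<tau> 1 2" "?\<tau> 0 1"])
    show "\<not> (circular_split n \<pi> (pair_split n 0 1) \<and> circular_split n \<pi> (pair_split n 1 2) \<and>
        circular_split n \<pi> (pair_split n 0 2))" if "circ_ordering n \<pi>" for \<pi>
      using pair_splits_not_all_circular[OF that assms, of 0 1 2] assms
      by (simp add: pair_split_commute[of n 2 0])
  qed (use orderings nontrivial consecutive[of id 0] consecutive[of id 1] consecutive[of "?\<tau> 1 2" 0]
      consecutive[of "?\<tau> 1 2" 1] consecutive[of "?\<tau> 0 1" 0] consecutive[of "?\<tau> 0 1" 1] assms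
      in \<open>simp_all add: numeral_2_eq_2 pair_split_commute\<close>)
qed

end
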